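(* Let $(Z,d)$ be a distance space, $X\cup Y=Z$ a cover, $A:=X\cap Y$, and $r\in[0,\infty)$. Assume there is $v\in A$ such that for all $x\in X\setminus A$ and $y\in Y\setminus A$ with $d(x,y)\le r$ one has $d(x,v)\le r$ and $d(y,v)\le r$. Fix such a $v$ and assume in addition that one of the following holds: (1) for every $x\in X\setminus A$ and $y\in Y\setminus A$ with $d(x,y)\le r$, every $w\in A$ with $d(w,x)\le r$ and $d(w,y)\le r$ satisfies $d(v,w)\le r$; (2) $\mathrm{diam}(A)\le r$; (3) $A=\{v\}$. Then the inclusion $\mathrm{VR}_r(X)\cup\mathrm{VR}_r(Y)\hookrightarrow\mathrm{VR}_r(Z)$ is a weak equivalence.
   Context: A distance on a set $Z$ is a function $d\colon Z\times Z\to[0,\infty]$ with $d(x,y)=d(y,x)$ and $d(x,x)=0$ (no triangle inequality assumed). $\mathrm{diam}(A)$ is the supremum of $d(a,b)$ over $a,b\in A$ (the maximum for finite $A$). For $B\subset Z$ and $r\in[0,\infty)$, $\mathrm{VR}_r(B)$ is the simplicial complex of all finite nonempty $\sigma\subset B$ with $d(x,y)\le r$ for all $x,y\in\sigma$. Homotopical notions refer to geometric realizations. *)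

theory Defs
  imports "HOL-Analysis.Analysis"
begin

text \<open>A distance takes values in [0,infinity]; we use ennreal. The radius r is a real r >= 0,
  compared via ennreal r.\<close>

definition diam_d :: "('a \<Rightarrow> 'a \<Rightarrow> ennreal) \<Rightarrow> 'a set \<Rightarrow> ennreal" where
  "diam_d d A = Sup {d a b | a b. a \<in> A \<and> b \<in> A}"

definition VR :: "('a \<Rightarrow> 'a \<Rightarrow> ennreal) \<Rightarrow> real \<Rightarrow> 'a set \<Rightarrow> 'a set set" where
  "VR d r B = {\<sigma>. finite \<sigma> \<and> \<sigma> \<noteq> {} \<and> \<sigma> \<subseteq> B \<and> (\<forall>x\<in>\<sigma>. \<forall>y\<in>\<sigma>. d x y \<le> ennreal r)}"

text \<open>Points of the realization of K are barycentric coordinate functions: nonnegative,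
  with support a simplex of K and coordinates summing to 1.\<close>

definition realization :: "'a set set \<Rightarrow> ('a \<Rightarrow> real) set" where
  "realization K = {f. (\<forall>x. 0 \<le> f x) \<and> {x. f x \<noteq> 0} \<in> K \<and> sum f {x. f x \<noteq> 0} = 1}"

definition closed_simplex :: "'a set \<Rightarrow> ('a \<Rightarrow> real) set" where
  "closed_simplex \<sigma> = {f. (\<forall>x. 0 \<le> f x) \<and> (\<forall>x. x \<notin> \<sigma> \<longrightarrow> f x = 0) \<and> sum f \<sigma> = 1}"

text \<open>Each closed simplex carries its Euclidean topology (= subspace of the product topology,
  since it lies in a finite-dimensional coordinate subspace); the realization carries the
  coherent (weak) topology with respect to the closed simplices.\<close>
definition realization_open :: "'a set set \<Rightarrow> ('a \<Rightarrow> real) set \<Rightarrow> bool" where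
  "realization_open K U \<longleftrightarrow> U \<subseteq> realization K \<and>
     (\<forall>\<sigma>\<in>K. openin (subtopology (powertop_real UNIV) (closed_simplex \<sigma>)) (U \<inter> closed_simplex \<sigma>))"

lemma istopology_realization_open: "istopology (realization_open K)"
  unfolding istopology_def realization_open_def
proof (intro conjI allI impI)
  fix S T assume S: "S \<subseteq> realization K \<and> (\<forall>\<sigma>\<in>K. openin (subtopology (powertop_real UNIV) (closed_simplex \<sigma>)) (S \<inter> closed_simplex \<sigma>))"
    and T: "T \<subseteq> realization K \<and> (\<forall>\<sigma>\<in>K. openin (subtopology (powertop_real UNIV) (closed_simplex \<sigma>)) (T \<inter> closed_simplex \<sigma>))"
  show "S \<inter> T \<subseteq> realization K" using S by blast
  show "\<forall>\<sigma>\<in>K. openin (subtopology (powertop_real UNIV) (closed_simplex \<sigma>)) (S \<inter> T \<inter> closed_simplex \<sigma>)"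
  proof
    fix \<sigma> assume "\<sigma> \<in> K"
    then have "openin (subtopology (powertop_real UNIV) (closed_simplex \<sigma>)) ((S \<inter> closed_simplex \<sigma>) \<inter> (T \<inter> closed_simplex \<sigma>))"
      using S T \<open>\<sigma> \<in> K\<close> by (metis openin_Int)
    then show "openin (subtopology (powertop_real UNIV) (closed_simplex \<sigma>)) (S \<inter> T \<inter> closed_simplex \<sigma>)"
      by (simp add: Int_ac)
  qed
next
  fix \<K> assume H: "\<forall>U\<in>\<K>. U \<subseteq> realization K \<and> (\<forall>\<sigma>\<in>K. openin (subtopology (powertop_real UNIV) (closed_simplex \<sigma>)) (U \<inter> closed_simplex \<sigma>))"
  show "\<Union>\<K> \<subseteq> realization K" using H by blast
  show "\<forall>\<sigma>\<in>K. openin (subtopology (powertop_real UNIV) (closed_simplex \<sigma>)) (\<Union>\<K> \<inter> closed_simplex \<sigma>)"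
  proof
    fix \<sigma> assume "\<sigma> \<in> K"
    then have "openin (subtopology (powertop_real UNIV) (closed_simplex \<sigma>)) (\<Union>((\<lambda>U. U \<inter> closed_simplex \<sigma>) ` \<K>))"
      using H \<open>\<sigma> \<in> K\<close> by (intro openin_Union) blast
    moreover have "\<Union>((\<lambda>U. U \<inter> closed_simplex \<sigma>) ` \<K>) = \<Union>\<K> \<inter> closed_simplex \<sigma>" by blast
    ultimately show "openin (subtopology (powertop_real UNIV) (closed_simplex \<sigma>)) (\<Union>\<K> \<inter> closed_simplex \<sigma>)"
      by simp
  qed
qed

definition realization_top :: "'a set set \<Rightarrow> ('a \<Rightarrow> real) topology" where
  "realization_top K = topology (realization_open K)"

text \<open>The n-cube I^n, with coordinates indexed by {0..<n} (other coordinates 0), and its boundary.\<close>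
definition cube :: "nat \<Rightarrow> (nat \<Rightarrow> real) set" where
  "cube n = {t. (\<forall>i<n. 0 \<le> t i \<and> t i \<le> 1) \<and> (\<forall>i\<ge>n. t i = 0)}"

definition cube_boundary :: "nat \<Rightarrow> (nat \<Rightarrow> real) set" where
  "cube_boundary n = {t \<in> cube n. \<exists>i<n. t i = 0 \<or> t i = 1}"

definition cube_top :: "nat \<Rightarrow> (nat \<Rightarrow> real) topology" where
  "cube_top n = subtopology (powertop_real UNIV) (cube n)"

text \<open>Representatives of elements of pi_n(X,x0): maps (I^n, boundary) -> (X, x0).\<close>
definition based_cube_map :: "'b topology \<Rightarrow> 'b \<Rightarrow> nat \<Rightarrow> ((nat \<Rightarrow> real) \<Rightarrow> 'b) \<Rightarrow> bool" where
  "based_cube_map X x0 n \<alpha> \<longleftrightarrow> continuous_map (cube_top n) X \<alpha> \<and> (\<forall>t\<in>cube_boundary n. \<alpha> t = x0)"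

definition homotopic_rel_boundary :: "'b topology \<Rightarrow> 'b \<Rightarrow> nat \<Rightarrow> ((nat \<Rightarrow> real) \<Rightarrow> 'b) \<Rightarrow> ((nat \<Rightarrow> real) \<Rightarrow> 'b) \<Rightarrow> bool" where
  "homotopic_rel_boundary X x0 n \<alpha> \<beta> \<longleftrightarrow>
     homotopic_with (\<lambda>h. \<forall>t\<in>cube_boundary n. h t = x0) (cube_top n) X \<alpha> \<beta>"

text \<open>f induces a bijection pi_n(X,x0) -> pi_n(Y, f x0) (unfolded: surjective and injective
  on based homotopy classes).\<close>
definition induces_bij_pi :: "'b topology \<Rightarrow> 'c topology \<Rightarrow> ('b \<Rightarrow> 'c) \<Rightarrow> nat \<Rightarrow> 'b \<Rightarrow> bool" where
  "induces_bij_pi X Y f n x0 \<longleftrightarrow>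
     (\<forall>\<beta>. based_cube_map Y (f x0) n \<beta> \<longrightarrow>
        (\<exists>\<alpha>. based_cube_map X x0 n \<alpha> \<and> homotopic_rel_boundary Y (f x0) n (f \<circ> \<alpha>) \<beta>)) \<and>
     (\<forall>\<alpha> \<alpha>'. based_cube_map X x0 n \<alpha> \<longrightarrow> based_cube_map X x0 n \<alpha>' \<longrightarrow>
        homotopic_rel_boundary Y (f x0) n (f \<circ> \<alpha>) (f \<circ> \<alpha>') \<longrightarrow>
        homotopic_rel_boundary X x0 n \<alpha> \<alpha>')"

definition weak_homotopy_equivalence :: "'b topology \<Rightarrow> 'c topology \<Rightarrow> ('b \<Rightarrow> 'c) \<Rightarrow> bool" where
  "weak_homotopy_equivalence X Y f \<longleftrightarrow>
     continuous_map X Y f \<and>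
     (\<forall>y\<in>topspace Y. \<exists>x\<in>topspace X. path_component_of Y (f x) y) \<and>
     (\<forall>x\<in>topspace X. \<forall>x'\<in>topspace X. path_component_of Y (f x) (f x') \<longrightarrow> path_component_of X x x') \<and>
     (\<forall>n\<ge>1. \<forall>x0\<in>topspace X. induces_bij_pi X Y f n x0)"

end

theory Submission
  imports Defs
begin

text \<open>
  Realizations carry the coherent topology, so a compact subset of a realization meets only
  finitely many open simplices.  Consequently, if \<open>K \<subseteq> L\<close> and \<open>g : |L| \<rightarrow> |K|\<close> fixes \<open>|K|\<close>, is
  continuous on each closed simplex of \<open>L\<close>, and keeps every point of a simplex inside a larger
  simplex of \<open>L\<close>, then composing with \<open>g\<close> and the straight-line homotopy from \<open>g\<close> to the
  identity show that \<open>|K| \<hookrightarrow> |L|\<close> is bijective on path components and on all homotopy groups.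

  For \<open>VR\<^sub>r(X) \<union> VR\<^sub>r(Y) \<subseteq> VR\<^sub>r(Z)\<close>, a simplex \<open>\<sigma>\<close> lying in neither \<open>X\<close> nor \<open>Y\<close> meets both
  \<open>X - A\<close> and \<open>Y - A\<close>, and the hypotheses on \<open>v\<close> make \<open>\<sigma> \<union> {v}\<close> a simplex.  The map \<open>g\<close> lets
  every vertex on one side give up the minimum of its weight and the total weight of the other
  side to \<open>v\<close>.  This is continuous in the barycentric coordinates and empties the lighter side,
  so \<open>g\<close> lands in a face of \<open>\<sigma> \<union> {v}\<close> contained in \<open>X\<close> or in \<open>Y\<close>.
\<close>

section \<open>Abstract simplicial complexes and their realizations\<close>

definition abstract_simplicial_complex :: "'a set set \<Rightarrow> bool" where
  "abstract_simplicial_complex K \<longleftrightarrow>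
     (\<forall>\<sigma>\<in>K. finite \<sigma> \<and> \<sigma> \<noteq> {} \<and> (\<forall>\<tau>. \<tau> \<subseteq> \<sigma> \<longrightarrow> \<tau> \<noteq> {} \<longrightarrow> \<tau> \<in> K))"

lemma abstract_simplicial_complexD:
  assumes "abstract_simplicial_complex K" "\<sigma> \<in> K"
  shows "finite \<sigma>" and "\<tau> \<subseteq> \<sigma> \<Longrightarrow> \<tau> \<noteq> {} \<Longrightarrow> \<tau> \<in> K"
  using assms unfolding abstract_simplicial_complex_def by blast+

definition support :: "('a \<Rightarrow> real) \<Rightarrow> 'a set" where
  "support f = {x. f x \<noteq> 0}"

definition convex_comb :: "real \<Rightarrow> ('a \<Rightarrow> real) \<Rightarrow> ('a \<Rightarrow> real) \<Rightarrow> 'a \<Rightarrow> real" where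
  "convex_comb t f f' = (\<lambda>a. (1 - t) * f a + t * f' a)"

lemma convex_comb_0 [simp]: "convex_comb 0 f f' = f"
  and convex_comb_1 [simp]: "convex_comb 1 f f' = f'"
  and convex_comb_same [simp]: "convex_comb t f f = f"
  by (simp_all add: convex_comb_def algebra_simps)

lemma closed_simplexD:
  assumes "f \<in> closed_simplex \<sigma>"
  shows "0 \<le> f x" and "x \<notin> \<sigma> \<Longrightarrow> f x = 0" and "sum f \<sigma> = 1"
  using assms unfolding closed_simplex_def by auto

lemma support_subset_closed_simplex: "f \<in> closed_simplex \<sigma> \<Longrightarrow> support f \<subseteq> \<sigma>"
  unfolding support_def closed_simplex_def by auto

lemma support_closed_simplex_nonempty: "f \<in> closed_simplex \<sigma> \<Longrightarrow> support f \<noteq> {}"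
  unfolding closed_simplex_def support_def by force

lemma closed_simplex_mono:
  assumes "\<sigma> \<subseteq> \<tau>" "finite \<tau>" "f \<in> closed_simplex \<sigma>"
  shows "f \<in> closed_simplex \<tau>"
proof -
  have "sum f \<tau> = sum f \<sigma>"
    using assms by (intro sum.mono_neutral_right) (auto simp: closed_simplex_def)
  then show ?thesis using assms unfolding closed_simplex_def by auto
qed

lemma convex_comb_in_closed_simplex:
  assumes "f \<in> closed_simplex \<tau>" "f' \<in> closed_simplex \<tau>" "t \<in> {0..1}"
  shows "convex_comb t f f' \<in> closed_simplex \<tau>"
proof -
  have "sum (convex_comb t f f') \<tau> = (1 - t) * sum f \<tau> + t * sum f' \<tau>"
    by (simp add: convex_comb_def sum.distrib sum_distrib_left)
  then show ?thesis
    using assms unfolding closed_simplex_def convex_comb_def by simp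
qed

lemma closed_closed_simplex: "closed (closed_simplex \<sigma>)"
proof -
  have "closed_simplex \<sigma> =
      (\<Inter>x. {f. 0 \<le> f x}) \<inter> (\<Inter>x\<in>-\<sigma>. {f. f x = 0}) \<inter> {f. sum f \<sigma> = 1}"
    unfolding closed_simplex_def by auto
  moreover have "continuous_on UNIV (\<lambda>f::'a \<Rightarrow> real. f x)" for x
    by (rule continuous_on_product_coordinates)
  ultimately show ?thesis
    by (simp add: closed_INT closed_Int closed_Collect_le closed_Collect_eq
        continuous_on_sum continuous_on_const)
qed

lemma realizationD:
  "f \<in> realization K \<Longrightarrow> f \<in> closed_simplex (support f) \<and> support f \<in> K"
  unfolding realization_def closed_simplex_def support_def by auto

lemma closed_simplex_in_realization:
  assumes "finite \<sigma>" "f \<in> closed_simplex \<sigma>" "support f \<in> K"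
  shows "f \<in> realization K"
proof -
  have "sum f (support f) = sum f \<sigma>"
    using assms support_subset_closed_simplex by (intro sum.mono_neutral_left) (auto simp: support_def)
  then show ?thesis
    using assms closed_simplexD unfolding realization_def support_def by auto
qed

lemma closed_simplex_subset_realization:
  assumes K: "abstract_simplicial_complex K" and "\<sigma> \<in> K"
  shows "closed_simplex \<sigma> \<subseteq> realization K"
proof
  fix f assume f: "f \<in> closed_simplex \<sigma>"
  have "finite \<sigma>" by (rule abstract_simplicial_complexD(1)[OF K \<open>\<sigma> \<in> K\<close>])
  moreover have "support f \<in> K"
    using abstract_simplicial_complexD(2)[OF K \<open>\<sigma> \<in> K\<close>] support_subset_closed_simplex[OF f]
      support_closed_simplex_nonempty[OF f] by blast
  ultimately show "f \<in> realization K" by (rule closed_simplex_in_realization[OF _ f])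
qed

lemma realization_mono: "K \<subseteq> L \<Longrightarrow> realization K \<subseteq> realization L"
  unfolding realization_def by blast

lemma openin_realization_top: "openin (realization_top K) U \<longleftrightarrow> realization_open K U"
  by (simp add: realization_top_def istopology_realization_open)

lemma topspace_realization_top:
  assumes "abstract_simplicial_complex K"
  shows "topspace (realization_top K) = realization K"
proof -
  have "realization_open K (realization K)"
    using closed_simplex_subset_realization[OF assms]
    by (auto simp: realization_open_def Int_absorb1 euclidean_product_topology)
  then show ?thesis
    by (metis openin_realization_top openin_subset openin_topspace realization_open_def subset_antisym)
qed

lemma openin_realization_top_Int:
  assumes K: "abstract_simplicial_complex K"
    and U: "\<And>\<sigma>. \<sigma> \<in> K \<Longrightarrow> openin (top_of_set (closed_simplex \<sigma>)) (U \<inter> closed_simplex \<sigma>)"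
  shows "openin (realization_top K) (realization K \<inter> U)"
  unfolding openin_realization_top realization_open_def
proof (intro conjI ballI)
  fix \<sigma> assume "\<sigma> \<in> K"
  then have "realization K \<inter> U \<inter> closed_simplex \<sigma> = U \<inter> closed_simplex \<sigma>"
    using closed_simplex_subset_realization[OF K] by blast
  then show "openin (subtopology (powertop_real UNIV) (closed_simplex \<sigma>)) (realization K \<inter> U \<inter> closed_simplex \<sigma>)"
    using U[OF \<open>\<sigma> \<in> K\<close>] by (simp add: euclidean_product_topology)
qed simp

lemma continuous_map_realization_top_euclidean:
  assumes K: "abstract_simplicial_complex K"
  shows "continuous_map (realization_top K) euclidean id"
  unfolding continuous_map_def
proof (intro conjI allI impI)
  fix U :: "('a \<Rightarrow> real) set" assume "openin euclidean U"
  then have "openin (realization_top K) (realization K \<inter> U)"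
    by (intro openin_realization_top_Int[OF K]) (metis Int_commute openin_open_Int open_openin)
  then show "openin (realization_top K) {x \<in> topspace (realization_top K). id x \<in> U}"
    by (simp add: topspace_realization_top[OF K] Int_def)
qed simp

lemma continuous_map_realization_top_mono:
  assumes K: "abstract_simplicial_complex K" and L: "abstract_simplicial_complex L"
    and "K \<subseteq> L"
  shows "continuous_map (realization_top K) (realization_top L) id"
  unfolding continuous_map_def
proof (intro conjI allI impI)
  show "id \<in> topspace (realization_top K) \<rightarrow> topspace (realization_top L)"
    using realization_mono[OF \<open>K \<subseteq> L\<close>] by (auto simp: topspace_realization_top K L)
  fix U assume "openin (realization_top L) U"
  then have "openin (realization_top K) (realization K \<inter> U)"
    using \<open>K \<subseteq> L\<close> by (intro openin_realization_top_Int[OF K])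
      (auto simp: openin_realization_top realization_open_def euclidean_product_topology)
  then show "openin (realization_top K) {x \<in> topspace (realization_top K). id x \<in> U}"
    by (simp add: topspace_realization_top[OF K] Int_def)
qed

lemma closed_closed_simplex_diff:
  assumes "openin (subtopology (powertop_real UNIV) (closed_simplex \<sigma>)) (U \<inter> closed_simplex \<sigma>)"
  shows "closed (closed_simplex \<sigma> - U)"
proof -
  have "closedin (top_of_set (closed_simplex \<sigma>)) (closed_simplex \<sigma> - U \<inter> closed_simplex \<sigma>)"
    using assms by (simp add: euclidean_product_topology closedin_diff)
  then show ?thesis
    using closed_closed_simplex closedin_closed_trans by (metis Diff_Int2 inf.idem)
qed

lemma continuous_map_into_realization_top:
  assumes L: "abstract_simplicial_complex L" and h: "continuous_map W euclidean h"
    and F: "finite F" "F \<subseteq> L" and im: "h ` topspace W \<subseteq> (\<Union>\<sigma>\<in>F. closed_simplex \<sigma>)"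
  shows "continuous_map W (realization_top L) h"
  unfolding continuous_map_def
proof (intro conjI allI impI)
  show "h \<in> topspace W \<rightarrow> topspace (realization_top L)"
    using im F(2) closed_simplex_subset_realization[OF L] topspace_realization_top[OF L] by blast
  fix U assume "openin (realization_top L) U"
  then have "closed (closed_simplex \<sigma> - U)" if "\<sigma> \<in> F" for \<sigma>
    using that F(2) by (auto simp: openin_realization_top realization_open_def intro!: closed_closed_simplex_diff)
  then have "closed (\<Union>\<sigma>\<in>F. closed_simplex \<sigma> - U)"
    using F(1) by (intro closed_UN) auto
  then have "closedin W {x \<in> topspace W. h x \<in> (\<Union>\<sigma>\<in>F. closed_simplex \<sigma> - U)}"
    using h by (intro closedin_continuous_map_preimage) auto
  moreover have "{x \<in> topspace W. h x \<in> U} =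
      topspace W - {x \<in> topspace W. h x \<in> (\<Union>\<sigma>\<in>F. closed_simplex \<sigma> - U)}"
    using im by blast
  ultimately show "openin W {x \<in> topspace W. h x \<in> U}"
    by (simp add: openin_diff)
qed

lemma pathin_convex_comb:
  assumes L: "abstract_simplicial_complex L" and "\<tau> \<in> L"
    and "f \<in> closed_simplex \<tau>" "f' \<in> closed_simplex \<tau>"
  shows "pathin (realization_top L) (\<lambda>t. convex_comb t f f')"
  unfolding pathin_def
proof (rule continuous_map_into_realization_top[OF L])
  have "continuous_on {0..1} (\<lambda>t. convex_comb t f f')"
    unfolding convex_comb_def
    by (intro continuous_on_coordinatewise_then_product continuous_intros)
  then show "continuous_map (top_of_set {0..1}) euclidean (\<lambda>t. convex_comb t f f')"
    by simp
  show "(\<lambda>t. convex_comb t f f') ` topspace (top_of_set {0..1}) \<subseteq> (\<Union>\<sigma>\<in>{\<tau>}. closed_simplex \<sigma>)"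
    using assms(3,4) by (auto intro: convex_comb_in_closed_simplex)
qed (use assms in auto)

text \<open>The function space is not an instance of \<^class>\<open>t1_space\<close>, so
  \<open>finite_imp_closed\<close> does not apply.\<close>

lemma finite_imp_closed_fun:
  assumes "finite (S :: ('a \<Rightarrow> real) set)"
  shows "closed S"
proof -
  have "t1_space (powertop_real (UNIV :: 'a set))"
    by (simp add: Hausdorff_imp_t1_space Hausdorff_space_product_topology Hausdorff_space_euclidean)
  then show ?thesis
    using assms by (simp add: t1_space_closedin_finite euclidean_product_topology)
qed

lemma closedin_realization_top_sparse:
  assumes K: "abstract_simplicial_complex K" and S: "S \<subseteq> realization K"
    and sparse: "\<And>\<tau>. \<tau> \<in> K \<Longrightarrow> finite (S \<inter> closed_simplex \<tau>)"
  shows "closedin (realization_top K) S"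
proof -
  have "realization_open K (realization K - S)"
    unfolding realization_open_def
  proof (intro conjI ballI)
    fix \<tau> assume "\<tau> \<in> K"
    have "closedin (top_of_set (closed_simplex \<tau>)) (S \<inter> closed_simplex \<tau>)"
      using finite_imp_closed_fun[OF sparse[OF \<open>\<tau> \<in> K\<close>]] by (simp add: closed_subset)
    then have "openin (top_of_set (closed_simplex \<tau>)) (closed_simplex \<tau> - S \<inter> closed_simplex \<tau>)"
      by (metis openin_diff openin_topspace topspace_euclidean_subtopology)
    moreover have "closed_simplex \<tau> - S \<inter> closed_simplex \<tau> = (realization K - S) \<inter> closed_simplex \<tau>"
      using closed_simplex_subset_realization[OF K \<open>\<tau> \<in> K\<close>] by blast
    ultimately show "openin (subtopology (powertop_real UNIV) (closed_simplex \<tau>)) ((realization K - S) \<inter> closed_simplex \<tau>)"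
      by (simp add: euclidean_product_topology)
  qed blast
  then show ?thesis
    using S by (simp add: closedin_def openin_realization_top topspace_realization_top[OF K])
qed

lemma finite_if_subsets_closedin_compactin:
  assumes "compactin X C" "T \<subseteq> C" and closed: "\<And>T'. T' \<subseteq> T \<Longrightarrow> closedin X T'"
  shows "finite T"
proof (rule ccontr)
  assume "infinite T"
  then obtain x where "x \<in> X derived_set_of T"
    using compactin_imp_Bolzano_Weierstrass[OF assms(1), of T] assms(2) by auto
  then have x: "x \<in> topspace X"
    and limit: "\<And>U. x \<in> U \<Longrightarrow> openin X U \<Longrightarrow> \<exists>y. y \<noteq> x \<and> y \<in> T \<and> y \<in> U"
    unfolding derived_set_of_def by blast+
  have "openin X (topspace X - (T - {x}))"
    using closed[of "T - {x}"] by (simp add: closedin_def)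
  then show False
    using limit[of "topspace X - (T - {x})"] x by blast
qed

text \<open>Choosing one point of \<open>C\<close> per support yields a subset of \<open>C\<close> that meets every
  closed simplex in finitely many points; all its subsets are therefore closed, and
  compactness forces it to be finite.\<close>

lemma finite_support_image_compactin:
  assumes K: "abstract_simplicial_complex K" and C: "compactin (realization_top K) C"
  shows "finite (support ` C)"
proof -
  define rep where "rep = inv_into C support"
  have rep: "rep s \<in> C" "support (rep s) = s" if "s \<in> support ` C" for s
    using that by (simp_all add: rep_def inv_into_into f_inv_into_f)
  define S where "S = rep ` support ` C"
  have S_C: "S \<subseteq> C" using rep(1) by (auto simp: S_def)
  have "support ` S = (\<lambda>s. support (rep s)) ` support ` C"
    by (simp add: S_def image_image)
  also have "\<dots> = support ` C"
    using rep(2) by simp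
  finally have support_S: "support ` S = support ` C" .
  have sparse: "finite (S' \<inter> closed_simplex \<tau>)" if S': "S' \<subseteq> S" and "\<tau> \<in> K" for S' \<tau>
  proof (rule finite_subset)
    show "S' \<inter> closed_simplex \<tau> \<subseteq> rep ` (support ` C \<inter> Pow \<tau>)"
    proof
      fix a assume a: "a \<in> S' \<inter> closed_simplex \<tau>"
      then have "a \<in> rep ` support ` C" using S' by (auto simp: S_def)
      then obtain s where s: "s \<in> support ` C" "a = rep s" by blast
      have "s \<subseteq> \<tau>" using support_subset_closed_simplex[of a \<tau>] a rep(2)[OF s(1)] s(2) by simp
      then show "a \<in> rep ` (support ` C \<inter> Pow \<tau>)" using s by blast
    qed
    have "finite \<tau>" by (rule abstract_simplicial_complexD(1)[OF K \<open>\<tau> \<in> K\<close>])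
    then show "finite (rep ` (support ` C \<inter> Pow \<tau>))" by simp
  qed
  have C_K: "C \<subseteq> realization K"
    using C compactin_subset_topspace topspace_realization_top[OF K] by blast
  have "finite S"
  proof (rule finite_if_subsets_closedin_compactin[OF C S_C])
    fix S' assume "S' \<subseteq> S"
    then show "closedin (realization_top K) S'"
      using S_C C_K sparse by (intro closedin_realization_top_sparse[OF K]) auto
  qed
  then show ?thesis using support_S by (metis finite_imageI)
qed

lemma compact_image_in_finite_subcomplex:
  assumes L: "abstract_simplicial_complex L" and W: "compact_space W"
    and h: "continuous_map W (realization_top L) h"
  obtains F where "finite F" "F \<subseteq> L" "h ` topspace W \<subseteq> (\<Union>\<sigma>\<in>F. closed_simplex \<sigma>)"
proof (rule that[of "support ` h ` topspace W"])
  have "compactin (realization_top L) (h ` topspace W)"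
    using image_compactin W h compact_space_def by blast
  then show "finite (support ` h ` topspace W)" by (rule finite_support_image_compactin[OF L])
  have "h ` topspace W \<subseteq> realization L"
    using h topspace_realization_top[OF L] continuous_map_image_subset_topspace by blast
  then have "f \<in> closed_simplex (support f) \<and> support f \<in> L" if "f \<in> h ` topspace W" for f
    using that realizationD by blast
  then show "support ` h ` topspace W \<subseteq> L"
    and "h ` topspace W \<subseteq> (\<Union>\<sigma>\<in>support ` h ` topspace W. closed_simplex \<sigma>)"
    by blast+
qed

lemma continuous_map_euclidean_fun_iff:
  "continuous_map W euclidean (F :: 'b \<Rightarrow> 'a \<Rightarrow> real) \<longleftrightarrow>
     (\<forall>a. continuous_map W euclideanreal (\<lambda>x. F x a))"
  by (metis continuous_map_componentwise_UNIV euclidean_product_topology)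

lemma compact_space_cube: "compact_space (cube_top n)"
proof -
  have "cube n = Pi\<^sub>E UNIV (\<lambda>i. if i < n then {0..1} else {0::real})"
    unfolding cube_def PiE_UNIV_domain by (auto simp: Pi_iff split: if_splits)
  moreover have "compactin (powertop_real UNIV) (Pi\<^sub>E UNIV (\<lambda>i. if i < n then {0..1} else {0::real}))"
    by (subst compactin_PiE) auto
  ultimately show ?thesis unfolding cube_top_def by (simp add: compact_space_subtopology)
qed

lemma compact_space_unit_interval_prod:
  "compact_space W \<Longrightarrow> compact_space (prod_topology (top_of_set {0..1::real}) W)"
  by (simp add: compact_space_prod_topology compact_space_subtopology)

section \<open>Retractions that move each point within a simplex\<close>

locale simplexwise_retraction =
  fixes K L :: "'a set set" and g :: "('a \<Rightarrow> real) \<Rightarrow> 'a \<Rightarrow> real"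
  assumes complex_K: "abstract_simplicial_complex K"
    and complex_L: "abstract_simplicial_complex L"
    and subcomplex: "K \<subseteq> L"
    and retraction: "\<And>f. f \<in> realization K \<Longrightarrow> g f = f"
    and continuous_on_simplex: "\<And>\<sigma>. \<sigma> \<in> L \<Longrightarrow> continuous_on (closed_simplex \<sigma>) g"
    and maps_simplex: "\<And>\<sigma>. \<sigma> \<in> L \<Longrightarrow>
       \<exists>\<tau>\<in>L. \<sigma> \<subseteq> \<tau> \<and> g ` closed_simplex \<sigma> \<subseteq> closed_simplex \<tau> \<inter> realization K"
begin

definition carrier :: "'a set \<Rightarrow> 'a set" where
  "carrier \<sigma> = (SOME \<tau>. \<tau> \<in> L \<and> \<sigma> \<subseteq> \<tau> \<and> g ` closed_simplex \<sigma> \<subseteq> closed_simplex \<tau> \<inter> realization K)"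

lemma carrier:
  assumes "\<sigma> \<in> L"
  shows "carrier \<sigma> \<in> L" "\<sigma> \<subseteq> carrier \<sigma>"
    and "f \<in> closed_simplex \<sigma> \<Longrightarrow> g f \<in> closed_simplex (carrier \<sigma>)"
    and "f \<in> closed_simplex \<sigma> \<Longrightarrow> g f \<in> realization K"
proof -
  obtain \<tau> where "\<tau> \<in> L \<and> \<sigma> \<subseteq> \<tau> \<and> g ` closed_simplex \<sigma> \<subseteq> closed_simplex \<tau> \<inter> realization K"
    using maps_simplex[OF assms] by blast
  then have "carrier \<sigma> \<in> L \<and> \<sigma> \<subseteq> carrier \<sigma> \<and>
      g ` closed_simplex \<sigma> \<subseteq> closed_simplex (carrier \<sigma>) \<inter> realization K"
    unfolding carrier_def by (rule someI)
  then show "carrier \<sigma> \<in> L" "\<sigma> \<subseteq> carrier \<sigma>"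
    and "f \<in> closed_simplex \<sigma> \<Longrightarrow> g f \<in> closed_simplex (carrier \<sigma>)"
    and "f \<in> closed_simplex \<sigma> \<Longrightarrow> g f \<in> realization K"
    by blast+
qed

lemma finite_carrier: "\<sigma> \<in> L \<Longrightarrow> finite (carrier \<sigma>)"
  by (rule abstract_simplicial_complexD(1)[OF complex_L carrier(1)])

lemma in_closed_simplex_carrier:
  "\<sigma> \<in> L \<Longrightarrow> f \<in> closed_simplex \<sigma> \<Longrightarrow> f \<in> closed_simplex (carrier \<sigma>)"
  by (rule closed_simplex_mono[OF carrier(2) finite_carrier])

lemma retraction_in_realization: "f \<in> realization L \<Longrightarrow> g f \<in> realization K"
  using realizationD[of f L] carrier(4)[of "support f" f] by simp

lemma continuous_map_compose_retraction:
  assumes W: "compact_space W" and h: "continuous_map W (realization_top L) h"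
  shows "continuous_map W (realization_top K) (g \<circ> h)"
proof -
  obtain F where F: "finite F" "F \<subseteq> L" "h ` topspace W \<subseteq> (\<Union>\<sigma>\<in>F. closed_simplex \<sigma>)"
    using compact_image_in_finite_subcomplex[OF complex_L W h] .
  define S where "S = (\<Union>\<sigma>\<in>F. closed_simplex \<sigma>)"
  have "continuous_on S g"
    unfolding S_def using F(1,2) continuous_on_simplex
    by (intro continuous_on_closed_Union closed_closed_simplex) auto
  moreover have "continuous_map W (top_of_set S) h"
    using continuous_map_compose[OF h continuous_map_realization_top_euclidean[OF complex_L]] F(3)
    by (auto simp: S_def continuous_map_in_subtopology)
  ultimately have "continuous_map W euclidean (g \<circ> h)"
    by (intro continuous_map_compose[of _ "top_of_set S"]) simp_all
  moreover have "finite (\<Union>\<sigma>\<in>F. Pow (carrier \<sigma>))"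
    using F(1,2) finite_carrier by blast
  moreover have "(g \<circ> h) ` topspace W \<subseteq> (\<Union>\<rho>\<in>K \<inter> (\<Union>\<sigma>\<in>F. Pow (carrier \<sigma>)). closed_simplex \<rho>)"
  proof
    fix y assume "y \<in> (g \<circ> h) ` topspace W"
    then obtain \<sigma> f where "\<sigma> \<in> F" "f \<in> closed_simplex \<sigma>" "y = g f"
      using F(3) by auto
    then have "y \<in> closed_simplex (carrier \<sigma>)" "y \<in> realization K"
      using F(2) carrier(3,4) by blast+
    then show "y \<in> (\<Union>\<rho>\<in>K \<inter> (\<Union>\<sigma>\<in>F. Pow (carrier \<sigma>)). closed_simplex \<rho>)"
      using \<open>\<sigma> \<in> F\<close> realizationD[of y K] support_subset_closed_simplex by blast
  qed
  ultimately show ?thesis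
    by (intro continuous_map_into_realization_top[OF complex_K]) auto
qed

lemma continuous_map_straight_line_homotopy:
  assumes W: "compact_space W" and h: "continuous_map W (realization_top L) h"
  shows "continuous_map (prod_topology (top_of_set {0..1}) W) (realization_top L)
           (\<lambda>(t, w). convex_comb t (g (h w)) (h w))"
proof -
  obtain F where F: "finite F" "F \<subseteq> L" "h ` topspace W \<subseteq> (\<Union>\<sigma>\<in>F. closed_simplex \<sigma>)"
    using compact_image_in_finite_subcomplex[OF complex_L W h] .
  have gh: "continuous_map W euclideanreal (\<lambda>w. g (h w) a)" "continuous_map W euclideanreal (\<lambda>w. h w a)" for a
    using continuous_map_compose[OF continuous_map_compose_retraction[OF W h]
          continuous_map_realization_top_euclidean[OF complex_K]]
      continuous_map_compose[OF h continuous_map_realization_top_euclidean[OF complex_L]]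
    by (simp_all add: continuous_map_euclidean_fun_iff o_def)
  have "continuous_map (prod_topology (top_of_set {0..1}) W) euclidean
      (\<lambda>(t, w). convex_comb t (g (h w)) (h w))"
    unfolding continuous_map_euclidean_fun_iff convex_comb_def case_prod_beta
    by (intro allI continuous_map_add continuous_map_real_mult continuous_map_diff
        continuous_map_const[THEN iffD2] continuous_map_compose[OF continuous_map_snd gh(1), unfolded o_def]
        continuous_map_compose[OF continuous_map_snd gh(2), unfolded o_def]
        continuous_map_compose[OF continuous_map_fst continuous_map_from_subtopology[OF continuous_map_id], unfolded o_def id_def])
      simp
  moreover have "finite (carrier ` F)" "carrier ` F \<subseteq> L"
    using F(1,2) carrier(1) by auto
  moreover have "(\<lambda>(t, w). convex_comb t (g (h w)) (h w)) ` topspace (prod_topology (top_of_set {0..1}) W)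
      \<subseteq> (\<Union>\<tau>\<in>carrier ` F. closed_simplex \<tau>)"
  proof clarsimp
    fix t :: real and w assume "0 \<le> t" "t \<le> 1" "w \<in> topspace W"
    then obtain \<sigma> where "\<sigma> \<in> F" "h w \<in> closed_simplex \<sigma>" using F(3) by blast
    then have "convex_comb t (g (h w)) (h w) \<in> closed_simplex (carrier \<sigma>)"
      using F(2) \<open>0 \<le> t\<close> \<open>t \<le> 1\<close>
      by (intro convex_comb_in_closed_simplex carrier(3) in_closed_simplex_carrier) auto
    then show "\<exists>\<sigma>\<in>F. convex_comb t (g (h w)) (h w) \<in> closed_simplex (carrier \<sigma>)"
      using \<open>\<sigma> \<in> F\<close> by blast
  qed
  ultimately show ?thesis
    by (rule continuous_map_into_realization_top[OF complex_L])
qed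

lemma homotopic_with_retraction_id:
  assumes W: "compact_space W" and h: "continuous_map W (realization_top L) h"
    and fixed: "\<And>s. s \<in> S \<Longrightarrow> h s \<in> realization K"
  shows "homotopic_with (\<lambda>k. \<forall>s\<in>S. k s = h s) W (realization_top L) (g \<circ> h) h"
proof -
  define H where "H = (\<lambda>(t, w). convex_comb t (g (h w)) (h w))"
  have "continuous_map (prod_topology (top_of_set {0..1}) W) (realization_top L) H"
    unfolding H_def by (rule continuous_map_straight_line_homotopy[OF W h])
  moreover have "H (0, x) = (g \<circ> h) x" "H (1, x) = h x" for x
    by (simp_all add: H_def)
  moreover have "H (t, s) = h s" if "s \<in> S" for t s
    using retraction[OF fixed[OF that]] by (simp add: H_def)
  ultimately show ?thesis
    unfolding homotopic_with_def by (intro exI[of _ H]) simp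
qed

lemma homotopic_with_compose_retraction:
  assumes W: "compact_space W" and hom: "homotopic_with P W (realization_top L) p q"
    and P: "\<And>k. P k \<Longrightarrow> P (g \<circ> k)"
  shows "homotopic_with P W (realization_top K) (g \<circ> p) (g \<circ> q)"
proof -
  obtain H where H: "continuous_map (prod_topology (top_of_set {0..1::real}) W) (realization_top L) H"
    "\<forall>x. H (0, x) = p x" "\<forall>x. H (1, x) = q x" "\<forall>t\<in>{0..1}. P (\<lambda>x. H (t, x))"
    using hom unfolding homotopic_with_def by blast
  show ?thesis
    unfolding homotopic_with_def
  proof (intro exI[of _ "g \<circ> H"] conjI allI ballI)
    show "continuous_map (prod_topology (top_of_set {0..1}) W) (realization_top K) (g \<circ> H)"
      by (rule continuous_map_compose_retraction[OF compact_space_unit_interval_prod[OF W] H(1)])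
    fix t :: real assume "t \<in> {0..1}"
    then have "P (g \<circ> (\<lambda>x. H (t, x)))" using P H(4) by blast
    then show "P (\<lambda>x. (g \<circ> H) (t, x))" by (simp add: o_def)
  qed (simp_all add: H(2,3))
qed

lemma path_component_of_retraction:
  assumes "y \<in> realization L"
  shows "path_component_of (realization_top L) (g y) y"
proof -
  have y: "support y \<in> L" "y \<in> closed_simplex (support y)"
    using realizationD[OF assms] by auto
  have "pathin (realization_top L) (\<lambda>t. convex_comb t (g y) y)"
    by (rule pathin_convex_comb[OF complex_L carrier(1)[OF y(1)] carrier(3)[OF y] in_closed_simplex_carrier[OF y]])
  then show ?thesis
    unfolding path_component_of_def by (intro exI[of _ "\<lambda>t. convex_comb t (g y) y"]) simp
qed

lemma path_component_of_reflects:
  assumes "x \<in> realization K" "x' \<in> realization K"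
    and "path_component_of (realization_top L) x x'"
  shows "path_component_of (realization_top K) x x'"
proof -
  obtain q where q: "pathin (realization_top L) q" "q 0 = x" "q 1 = x'"
    using assms(3) unfolding path_component_of_def by blast
  have "pathin (realization_top K) (g \<circ> q)"
    using continuous_map_compose_retraction[of "top_of_set {0..1}" q] q(1)
    by (simp add: pathin_def compact_space_subtopology)
  moreover have "(g \<circ> q) 0 = x" "(g \<circ> q) 1 = x'"
    using q(2,3) retraction[OF assms(1)] retraction[OF assms(2)] by simp_all
  ultimately show ?thesis
    unfolding path_component_of_def by blast
qed

lemma induces_bij_pi_inclusion:
  assumes x0: "x0 \<in> realization K"
  shows "induces_bij_pi (realization_top K) (realization_top L) id n x0"
proof -
  have boundary_in_cube: "cube_boundary n \<subseteq> topspace (cube_top n)"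
    by (auto simp: cube_top_def cube_boundary_def)
  show ?thesis
    unfolding induces_bij_pi_def homotopic_rel_boundary_def id_apply id_comp
  proof (intro conjI allI impI)
    fix \<beta> assume "based_cube_map (realization_top L) x0 n \<beta>"
    then have \<beta>_cont: "continuous_map (cube_top n) (realization_top L) \<beta>"
      and \<beta>_boundary: "\<And>t. t \<in> cube_boundary n \<Longrightarrow> \<beta> t = x0"
      unfolding based_cube_map_def by auto
    have "based_cube_map (realization_top K) x0 n (g \<circ> \<beta>)"
      unfolding based_cube_map_def
      using continuous_map_compose_retraction[OF compact_space_cube \<beta>_cont] \<beta>_boundary retraction[OF x0]
      by simp
    moreover have "homotopic_with (\<lambda>k. \<forall>t\<in>cube_boundary n. k t = \<beta> t)
        (cube_top n) (realization_top L) (g \<circ> \<beta>) \<beta>"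
      using \<beta>_boundary x0 by (intro homotopic_with_retraction_id[OF compact_space_cube \<beta>_cont]) simp
    then have "homotopic_with (\<lambda>k. \<forall>t\<in>cube_boundary n. k t = x0)
        (cube_top n) (realization_top L) (g \<circ> \<beta>) \<beta>"
      by (rule homotopic_with_mono) (simp add: \<beta>_boundary)
    ultimately show "\<exists>\<alpha>. based_cube_map (realization_top K) x0 n \<alpha> \<and>
        homotopic_with (\<lambda>h. \<forall>t\<in>cube_boundary n. h t = x0) (cube_top n) (realization_top L) \<alpha> \<beta>"
      by blast
  next
    fix \<alpha> \<alpha>'
    assume "based_cube_map (realization_top K) x0 n \<alpha>" "based_cube_map (realization_top K) x0 n \<alpha>'"
      and hom: "homotopic_with (\<lambda>h. \<forall>t\<in>cube_boundary n. h t = x0) (cube_top n) (realization_top L) \<alpha> \<alpha>'"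
    then have in_K: "\<alpha> t \<in> realization K" "\<alpha>' t \<in> realization K" if "t \<in> topspace (cube_top n)" for t
      using that topspace_realization_top[OF complex_K]
      unfolding based_cube_map_def by (auto dest!: continuous_map_image_subset_topspace)
    have "homotopic_with (\<lambda>h. \<forall>t\<in>cube_boundary n. h t = x0)
        (cube_top n) (realization_top K) (g \<circ> \<alpha>) (g \<circ> \<alpha>')"
      using retraction[OF x0] by (intro homotopic_with_compose_retraction[OF compact_space_cube hom]) simp
    then show "homotopic_with (\<lambda>h. \<forall>t\<in>cube_boundary n. h t = x0) (cube_top n) (realization_top K) \<alpha> \<alpha>'"
      by (rule homotopic_with_eq) (use in_K retraction boundary_in_cube in \<open>auto simp: subset_iff\<close>)
  qed
qed

theorem weak_homotopy_equivalence_inclusion: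
  "weak_homotopy_equivalence (realization_top K) (realization_top L) id"
  unfolding weak_homotopy_equivalence_def topspace_realization_top[OF complex_K] topspace_realization_top[OF complex_L]
  using continuous_map_realization_top_mono[OF complex_K complex_L subcomplex]
    path_component_of_retraction retraction_in_realization path_component_of_reflects induces_bij_pi_inclusion
  by auto

end

section \<open>Pushing the overlap of two masses onto an apex\<close>

definition mass :: "'a set \<Rightarrow> ('a \<Rightarrow> real) \<Rightarrow> real" where
  "mass B f = sum f (support f \<inter> B)"

definition transfer :: "'a set \<Rightarrow> 'a set \<Rightarrow> ('a \<Rightarrow> real) \<Rightarrow> 'a \<Rightarrow> real" where
  "transfer P Q f x =
     (if x \<in> P then min (f x) (mass Q f) else if x \<in> Q then min (f x) (mass P f) else 0)"

definition push_to_apex :: "'a set \<Rightarrow> 'a set \<Rightarrow> 'a \<Rightarrow> ('a \<Rightarrow> real) \<Rightarrow> 'a \<Rightarrow> real" where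
  "push_to_apex P Q v f =
     (\<lambda>x. f x - transfer P Q f x + (if x = v then sum (transfer P Q f) (support f) else 0))"

lemma mass_closed_simplex:
  assumes "finite T" "f \<in> closed_simplex T"
  shows "mass B f = sum f (T \<inter> B)"
  unfolding mass_def
  using assms support_subset_closed_simplex[OF assms(2)]
  by (intro sum.mono_neutral_left) (auto simp: support_def)

lemma mass_nonneg: "f \<in> closed_simplex T \<Longrightarrow> 0 \<le> mass B f"
  unfolding mass_def by (intro sum_nonneg) (simp add: closed_simplexD(1))

lemma transfer_bounds:
  assumes "f \<in> closed_simplex T"
  shows "0 \<le> transfer P Q f x" "transfer P Q f x \<le> f x"
proof -
  have "0 \<le> f x" "0 \<le> mass P f" "0 \<le> mass Q f"
    using closed_simplexD(1)[OF assms] mass_nonneg[OF assms] by blast+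
  then show "0 \<le> transfer P Q f x" "transfer P Q f x \<le> f x"
    unfolding transfer_def by simp_all
qed

lemma transfer_outside_support:
  assumes "f \<in> closed_simplex T" "x \<notin> support f"
  shows "transfer P Q f x = 0"
proof -
  have "f x = 0" using assms(2) by (simp add: support_def)
  then show ?thesis using transfer_bounds[OF assms(1), of P Q x] by simp
qed

lemma sum_transfer_closed_simplex:
  assumes "finite T" "f \<in> closed_simplex T"
  shows "sum (transfer P Q f) (support f) = sum (transfer P Q f) T"
proof (rule sum.mono_neutral_left[OF assms(1) support_subset_closed_simplex[OF assms(2)]])
  show "\<forall>x\<in>T - support f. transfer P Q f x = 0"
    using transfer_outside_support[OF assms(2)] by blast
qed

lemma push_to_apex_swap:
  assumes "P \<inter> Q = {}"
  shows "push_to_apex P Q v = push_to_apex Q P v"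
proof -
  have "transfer P Q = transfer Q P"
    using assms by (auto simp: transfer_def fun_eq_iff)
  then show ?thesis unfolding push_to_apex_def by (simp only:)
qed

lemma push_to_apex_in_closed_simplex:
  assumes T: "finite T" and f: "f \<in> closed_simplex T"
  shows "push_to_apex P Q v f \<in> closed_simplex (insert v T)"
proof -
  let ?c = "transfer P Q f"
  have f': "f \<in> closed_simplex (insert v T)"
    using closed_simplex_mono[OF subset_insertI _ f] T by simp
  have moved: "sum ?c (support f) = sum ?c (insert v T)"
    using sum_transfer_closed_simplex[OF _ f'] T by simp
  have "0 \<le> sum ?c (support f)"
    using transfer_bounds(1)[OF f] by (simp add: sum_nonneg)
  then have "0 \<le> push_to_apex P Q v f x" for x
    using transfer_bounds(2)[OF f, of P Q x] by (simp add: push_to_apex_def)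
  moreover have "push_to_apex P Q v f x = 0" if "x \<notin> insert v T" for x
    using that closed_simplexD(2)[OF f, of x] transfer_outside_support[OF f, of x]
    by (simp add: push_to_apex_def support_def)
  moreover have "sum (push_to_apex P Q v f) (insert v T) = 1"
    using closed_simplexD(3)[OF f'] moved T
    by (simp add: push_to_apex_def sum.distrib sum_subtractf)
  ultimately show ?thesis unfolding closed_simplex_def by blast
qed

lemma push_to_apex_vanishes:
  assumes T: "finite T" and f: "f \<in> closed_simplex T" and le: "mass P f \<le> mass Q f"
    and "x \<in> P" "v \<notin> P"
  shows "push_to_apex P Q v f x = 0"
proof -
  have "f x \<le> mass P f"
  proof (cases "x \<in> T")
    case True
    then have "f x \<le> sum f (T \<inter> P)"
      using T \<open>x \<in> P\<close> closed_simplexD(1)[OF f] by (intro member_le_sum) auto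
    then show ?thesis using mass_closed_simplex[OF T f] by simp
  qed (use closed_simplexD(2)[OF f] mass_nonneg[OF f] in simp)
  then have "transfer P Q f x = f x" using le \<open>x \<in> P\<close> by (simp add: transfer_def)
  moreover have "x \<noteq> v" using assms by blast
  ultimately show ?thesis by (simp add: push_to_apex_def)
qed

lemma support_push_to_apex_avoids:
  assumes "P \<inter> Q = {}" "v \<notin> P" "v \<notin> Q" "finite T" "f \<in> closed_simplex T"
  shows "support (push_to_apex P Q v f) \<inter> P = {} \<or> support (push_to_apex P Q v f) \<inter> Q = {}"
proof (cases "mass P f \<le> mass Q f")
  case True
  then show ?thesis using push_to_apex_vanishes[OF assms(4,5) True _ assms(2)]
    by (auto simp: support_def)
next
  case False
  then have "mass Q f \<le> mass P f" by simp
  then show ?thesis using push_to_apex_vanishes[OF assms(4,5) _ _ assms(3)]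
    by (auto simp: support_def push_to_apex_swap[OF assms(1)])
qed

lemma push_to_apex_eq_self:
  assumes T: "finite T" and f: "f \<in> closed_simplex T" and TQ: "T \<inter> Q = {}"
  shows "push_to_apex P Q v f = f"
proof -
  have "mass Q f = 0" using mass_closed_simplex[OF T f, of Q] TQ by simp
  moreover have "x \<in> Q \<Longrightarrow> f x = 0" for x
    using closed_simplexD(2)[OF f, of x] TQ by blast
  ultimately have "transfer P Q f x = 0" for x
    using closed_simplexD(1)[OF f, of x] mass_nonneg[OF f, of P] by (simp add: transfer_def)
  then show ?thesis by (simp add: push_to_apex_def fun_eq_iff)
qed

lemma continuous_on_push_to_apex:
  assumes T: "finite T"
  shows "continuous_on (closed_simplex T) (push_to_apex P Q v)"
proof -
  define c where "c f x =
      (if x \<in> P then min (f x) (sum f (T \<inter> Q)) else if x \<in> Q then min (f x) (sum f (T \<inter> P)) else 0)"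
    for f :: "'a \<Rightarrow> real" and x
  have coord: "continuous_on (closed_simplex T) (\<lambda>f. f x)" for x
    by (rule continuous_on_subset[OF continuous_on_product_coordinates]) simp
  have sums: "continuous_on (closed_simplex T) (\<lambda>f. sum f B)" for B
    by (intro continuous_on_sum coord)
  have c: "continuous_on (closed_simplex T) (\<lambda>f. c f x)" for x
    unfolding c_def by (cases "x \<in> P"; cases "x \<in> Q") (auto intro!: continuous_on_min coord sums)
  have "continuous_on (closed_simplex T) (\<lambda>f x. f x - c f x + (if x = v then sum (c f) T else 0))"
  proof (rule continuous_on_coordinatewise_then_product)
    fix x
    show "continuous_on (closed_simplex T) (\<lambda>f. f x - c f x + (if x = v then sum (c f) T else 0))"
      by (cases "x = v") (auto intro!: continuous_on_add continuous_on_diff continuous_on_sum coord c)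
  qed
  moreover have "(\<lambda>x. f x - c f x + (if x = v then sum (c f) T else 0)) = push_to_apex P Q v f"
    if f: "f \<in> closed_simplex T" for f
  proof -
    have transfer_eq: "transfer P Q f = c f"
      using mass_closed_simplex[OF T f] by (simp add: transfer_def c_def fun_eq_iff)
    have "sum (c f) (support f) = sum (c f) T"
      using sum_transfer_closed_simplex[OF T f, of P Q] unfolding transfer_eq .
    then show ?thesis
      unfolding push_to_apex_def transfer_eq by (simp only:)
  qed
  ultimately show ?thesis
    by (rule continuous_on_eq)
qed

section \<open>Vietoris--Rips complexes of a union\<close>

lemma abstract_simplicial_complex_VR: "abstract_simplicial_complex (VR d r B)"
  unfolding abstract_simplicial_complex_def VR_def by (auto intro: finite_subset)

lemma abstract_simplicial_complex_Un:
  "abstract_simplicial_complex K \<Longrightarrow> abstract_simplicial_complex L \<Longrightarrow> abstract_simplicial_complex (K \<union> L)"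
  unfolding abstract_simplicial_complex_def by blast

lemma VR_mono: "B \<subseteq> C \<Longrightarrow> VR d r B \<subseteq> VR d r C"
  unfolding VR_def by blast

lemma VR_restrict: "\<sigma> \<in> VR d r C \<Longrightarrow> \<sigma> \<subseteq> B \<Longrightarrow> \<sigma> \<in> VR d r B"
  unfolding VR_def by blast

lemma insert_apex_in_VR:
  fixes d :: "'a \<Rightarrow> 'a \<Rightarrow> ennreal"
  assumes d_sym: "\<And>x y. x \<in> X \<union> Y \<Longrightarrow> y \<in> X \<union> Y \<Longrightarrow> d x y = d y x" and "d v v = 0"
    and A: "A = X \<inter> Y" and "v \<in> A"
    and v_cone: "\<And>x y. x \<in> X - A \<Longrightarrow> y \<in> Y - A \<Longrightarrow> d x y \<le> ennreal r \<Longrightarrow>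
                   d x v \<le> ennreal r \<and> d y v \<le> ennreal r"
    and v_close: "\<And>x y w. x \<in> X - A \<Longrightarrow> y \<in> Y - A \<Longrightarrow> d x y \<le> ennreal r \<Longrightarrow>
                   w \<in> A \<Longrightarrow> d w x \<le> ennreal r \<Longrightarrow> d w y \<le> ennreal r \<Longrightarrow> d v w \<le> ennreal r"
    and \<sigma>: "\<sigma> \<in> VR d r (X \<union> Y)" "\<not> \<sigma> \<subseteq> X" "\<not> \<sigma> \<subseteq> Y"
  shows "insert v \<sigma> \<in> VR d r (X \<union> Y)"
proof -
  have "finite \<sigma>" and \<sigma>_XY: "\<sigma> \<subseteq> X \<union> Y"
    and close: "\<And>a b. a \<in> \<sigma> \<Longrightarrow> b \<in> \<sigma> \<Longrightarrow> d a b \<le> ennreal r"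
    using \<sigma>(1) unfolding VR_def by auto
  have v_XY: "v \<in> X \<union> Y" using \<open>v \<in> A\<close> A by blast
  obtain x y where x: "x \<in> \<sigma>" "x \<in> X - A" and y: "y \<in> \<sigma>" "y \<in> Y - A"
    using \<sigma> \<sigma>_XY A by blast
  have near_v: "d z v \<le> ennreal r" if z: "z \<in> \<sigma>" for z
  proof -
    consider "z \<in> X - A" | "z \<in> Y - A" | "z \<in> A" using z \<sigma>_XY A by blast
    then show ?thesis
    proof cases
      case 1
      then show ?thesis using v_cone[OF 1 y(2) close[OF z y(1)]] by blast
    next
      case 2
      then show ?thesis using v_cone[OF x(2) 2 close[OF x(1) z]] by blast
    next
      case 3
      have "d v z \<le> ennreal r"
        using v_close[OF x(2) y(2) close[OF x(1) y(1)] 3 close[OF z x(1)] close[OF z y(1)]] .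
      then show ?thesis using d_sym[OF subsetD[OF \<sigma>_XY z] v_XY] by simp
    qed
  qed
  have "d v z \<le> ennreal r" if "z \<in> \<sigma>" for z
    using near_v[OF that] d_sym[OF subsetD[OF \<sigma>_XY that] v_XY] by simp
  then have "d a b \<le> ennreal r" if "a \<in> insert v \<sigma>" "b \<in> insert v \<sigma>" for a b
    using that by (cases "a = v"; cases "b = v") (simp_all add: close near_v \<open>d v v = 0\<close>)
  then show ?thesis
    using \<open>finite \<sigma>\<close> \<sigma>_XY v_XY unfolding VR_def by blast
qed

lemma push_to_apex_in_realization_VR_Un:
  assumes v: "v \<in> X \<inter> Y" and cone: "insert v \<sigma> \<in> VR d r (X \<union> Y)" and f: "f \<in> closed_simplex \<sigma>"
  shows "push_to_apex (X - Y) (Y - X) v f \<in> realization (VR d r X \<union> VR d r Y)"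
proof -
  let ?h = "push_to_apex (X - Y) (Y - X) v f"
  have fin: "finite (insert v \<sigma>)" and "insert v \<sigma> \<subseteq> X \<union> Y"
    using cone unfolding VR_def by auto
  have h: "?h \<in> closed_simplex (insert v \<sigma>)"
    using push_to_apex_in_closed_simplex fin f by simp
  then have "support ?h \<subseteq> insert v \<sigma>" "support ?h \<noteq> {}"
    using support_subset_closed_simplex support_closed_simplex_nonempty by blast+
  then have in_VR: "support ?h \<in> VR d r (X \<union> Y)"
    by (rule abstract_simplicial_complexD(2)[OF abstract_simplicial_complex_VR cone])
  have "support ?h \<inter> (X - Y) = {} \<or> support ?h \<inter> (Y - X) = {}"
    using v fin f by (intro support_push_to_apex_avoids[of _ _ _ \<sigma>]) auto
  then have "support ?h \<subseteq> X \<or> support ?h \<subseteq> Y"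
    using \<open>support ?h \<subseteq> insert v \<sigma>\<close> \<open>insert v \<sigma> \<subseteq> X \<union> Y\<close> by blast
  then have "support ?h \<in> VR d r X \<union> VR d r Y"
    using VR_restrict[OF in_VR] by blast
  then show ?thesis
    by (rule closed_simplex_in_realization[OF fin h])
qed

lemma simplexwise_retraction_push_to_apex:
  assumes v: "v \<in> X \<inter> Y"
    and cone: "\<And>\<sigma>. \<sigma> \<in> VR d r (X \<union> Y) \<Longrightarrow> \<not> \<sigma> \<subseteq> X \<Longrightarrow> \<not> \<sigma> \<subseteq> Y \<Longrightarrow>
                 insert v \<sigma> \<in> VR d r (X \<union> Y)"
  shows "simplexwise_retraction (VR d r X \<union> VR d r Y) (VR d r (X \<union> Y)) (push_to_apex (X - Y) (Y - X) v)"
    (is "simplexwise_retraction ?K ?L ?g")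
proof
  show K: "abstract_simplicial_complex ?K" and L: "abstract_simplicial_complex ?L"
    by (intro abstract_simplicial_complex_Un abstract_simplicial_complex_VR)+
  show "?K \<subseteq> ?L" using VR_mono[of X "X \<union> Y"] VR_mono[of Y "X \<union> Y"] by blast
  have fixes_side: "?g f = f" if T: "finite T" "f \<in> closed_simplex T" and "T \<subseteq> X \<or> T \<subseteq> Y" for T f
  proof -
    have "?g = push_to_apex (Y - X) (X - Y) v"
      by (rule push_to_apex_swap) blast
    then show ?thesis
      using push_to_apex_eq_self[OF T, of "Y - X" "X - Y" v] push_to_apex_eq_self[OF T, of "X - Y" "Y - X" v]
        \<open>T \<subseteq> X \<or> T \<subseteq> Y\<close> by auto
  qed
  {
    fix f assume "f \<in> realization ?K"
    then have "f \<in> closed_simplex (support f)" "support f \<in> ?K"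
      using realizationD by blast+
    then show "?g f = f"
      using fixes_side unfolding VR_def by blast
  }
  fix \<sigma> assume \<sigma>: "\<sigma> \<in> ?L"
  then have fin: "finite \<sigma>" unfolding VR_def by blast
  then show "continuous_on (closed_simplex \<sigma>) ?g"
    by (rule continuous_on_push_to_apex)
  show "\<exists>\<tau>\<in>?L. \<sigma> \<subseteq> \<tau> \<and> ?g ` closed_simplex \<sigma> \<subseteq> closed_simplex \<tau> \<inter> realization ?K"
  proof (cases "\<sigma> \<subseteq> X \<or> \<sigma> \<subseteq> Y")
    case True
    then have "\<sigma> \<in> ?K" using VR_restrict[OF \<sigma>] by blast
    then have "closed_simplex \<sigma> \<subseteq> realization ?K"
      by (rule closed_simplex_subset_realization[OF K])
    then show ?thesis
      using \<sigma> fixes_side[OF fin _ True] by auto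
  next
    case False
    then have "insert v \<sigma> \<in> ?L" using cone \<sigma> by blast
    moreover have "?g ` closed_simplex \<sigma> \<subseteq> closed_simplex (insert v \<sigma>) \<inter> realization ?K"
      using push_to_apex_in_closed_simplex[OF fin] push_to_apex_in_realization_VR_Un[OF v \<open>insert v \<sigma> \<in> ?L\<close>]
      by blast
    ultimately show ?thesis by blast
  qed
qed

lemma overlap_close_to_apex:
  assumes "v \<in> A" "d v v = 0" "diam_d d A \<le> ennreal r \<or> A = {v}" "w \<in> A"
  shows "d v w \<le> ennreal r"
  using assms(3)
proof
  have "d v w \<in> {d a b | a b. a \<in> A \<and> b \<in> A}"
    using assms(1,4) by blast
  then have "d v w \<le> diam_d d A"
    unfolding diam_d_def by (rule Sup_upper)
  also assume "diam_d d A \<le> ennreal r"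
  finally show ?thesis .
next
  assume "A = {v}"
  then show ?thesis using assms(2,4) by simp
qed

theorem proposition10p5:
  fixes d :: "'a \<Rightarrow> 'a \<Rightarrow> ennreal" and Z X Y A :: "'a set" and r :: real and v :: 'a
  assumes d_sym: "\<And>x y. x \<in> Z \<Longrightarrow> y \<in> Z \<Longrightarrow> d x y = d y x"
    and d_refl: "\<And>x. x \<in> Z \<Longrightarrow> d x x = 0"
    and cover: "X \<union> Y = Z"
    and A_def: "A = X \<inter> Y"
    and r_nonneg: "0 \<le> r"
    and vA: "v \<in> A"
    and v_cone: "\<And>x y. x \<in> X - A \<Longrightarrow> y \<in> Y - A \<Longrightarrow> d x y \<le> ennreal r \<Longrightarrow>
                   d x v \<le> ennreal r \<and> d y v \<le> ennreal r"
    and extra: "(\<forall>x\<in>X - A. \<forall>y\<in>Y - A. d x y \<le> ennreal r \<longrightarrow>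
                   (\<forall>w\<in>A. d w x \<le> ennreal r \<and> d w y \<le> ennreal r \<longrightarrow> d v w \<le> ennreal r))
               \<or> diam_d d A \<le> ennreal r
               \<or> A = {v}"
  shows "weak_homotopy_equivalence
           (realization_top (VR d r X \<union> VR d r Y)) (realization_top (VR d r Z)) id"
proof -
  have "v \<in> Z" using vA A_def cover by blast
  have v_close: "d v w \<le> ennreal r"
    if "x \<in> X - A" "y \<in> Y - A" "d x y \<le> ennreal r" "w \<in> A" "d w x \<le> ennreal r" "d w y \<le> ennreal r"
    for x y w
    using extra
  proof (elim disjE)
    assume "\<forall>x\<in>X - A. \<forall>y\<in>Y - A. d x y \<le> ennreal r \<longrightarrow>
      (\<forall>w\<in>A. d w x \<le> ennreal r \<and> d w y \<le> ennreal r \<longrightarrow> d v w \<le> ennreal r)"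
    then show ?thesis using that by simp
  qed (use overlap_close_to_apex[of v A d r w, OF vA d_refl[OF \<open>v \<in> Z\<close>] _ \<open>w \<in> A\<close>] in blast)+
  have d_sym_XY: "d x y = d y x" if "x \<in> X \<union> Y" "y \<in> X \<union> Y" for x y
    using d_sym that unfolding cover .
  have cone: "insert v \<sigma> \<in> VR d r (X \<union> Y)"
    if "\<sigma> \<in> VR d r (X \<union> Y)" "\<not> \<sigma> \<subseteq> X" "\<not> \<sigma> \<subseteq> Y" for \<sigma>
    by (rule insert_apex_in_VR[OF d_sym_XY d_refl[OF \<open>v \<in> Z\<close>] A_def vA v_cone v_close that])
  interpret simplexwise_retraction "VR d r X \<union> VR d r Y" "VR d r (X \<union> Y)" "push_to_apex (X - Y) (Y - X) v"
    by (rule simplexwise_retraction_push_to_apex) (use vA A_def cone in auto)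
  show ?thesis
    unfolding cover[symmetric] by (rule weak_homotopy_equivalence_inclusion)
qed

end
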